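(* Let $U$ be the $4\times 15$ matrix over $\mathbb{F}_2$ whose columns are all $15$ nonzero vectors of $\mathbb{F}_2^4$, let $B_1=I_4$ and $B_2=\operatorname{diag}\!\left(\begin{bmatrix}0&1\\1&0\end{bmatrix},\begin{bmatrix}0&1\\1&0\end{bmatrix}\right)$, and let $F2R4A=\Gamma(U^tB_1U)$ and $F2R4B=\Gamma(U^tB_2U)$. Then a simple graph $G$ satisfies $\operatorname{mr}(\mathbb{F}_2,G)\le4$ if and only if $G$ is a blowup of $F2R4A\cup K_1$ or of $F2R4B\cup K_1$, where $K_1$ is a single isolated nonlooped vertex.
   Context: For a symmetric $n\times n$ matrix $A$, the looped graph corresponding to $A$, $\Gamma(A)$, has vertex set $\{1,\dots,n\}$, an edge $ij$ ($i\neq j$) iff $a_{ij}\neq0$, and a loop at $i$ iff $a_{ii}\ne 0$. For a simple graph $G$, $\operatorname{mr}(F,G)$ is the minimum rank of a symmetric matrix $A$ over $F$ with $a_{ij}\neq0$ for $i\ne j$ iff $ij$ is an edge of $G$ (diagonal unrestricted). A blowup of a looped graph $G$ with vertices $v_1,\dots,v_n$ is a simple graph obtained by replacing each nonlooped vertex $v_i$ by a (possibly empty) independent set $V_i$, each looped vertex $v_i$ by a (possibly empty) clique $V_i$, and each edge $v_iv_j$ ($i\ne j$) by all edges $xy$ with $x\in V_i$, $y\in V_j$. *)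

theory Defs
  imports "HOL-Library.Z2" "Jordan_Normal_Form.DL_Rank"
begin

definition simple_graph :: "nat \<Rightarrow> (nat \<Rightarrow> nat \<Rightarrow> bool) \<Rightarrow> bool" where
  "simple_graph n E \<longleftrightarrow> (\<forall>x<n. \<forall>y<n. E x y = E y x) \<and> (\<forall>x<n. \<not> E x x)"

text \<open>Minimum rank over F_2 (the field type bit) of symmetric matrices
  with the off-diagonal zero pattern of the graph; diagonal unrestricted.\<close>
definition mr_F2 :: "nat \<Rightarrow> (nat \<Rightarrow> nat \<Rightarrow> bool) \<Rightarrow> nat" where
  "mr_F2 n E = (LEAST r. \<exists>A :: bit mat. A \<in> carrier_mat n n \<and> transpose_mat A = A \<and>
      (\<forall>i<n. \<forall>j<n. i \<noteq> j \<longrightarrow> (A $$ (i,j) \<noteq> 0 \<longleftrightarrow> E i j)) \<and>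
      vec_space.rank n A = r)"

text \<open>Looped graphs: number of vertices m (vertices {0..<m}) and an adjacency
  relation L; L i i means vertex i has a loop.\<close>
type_synonym looped_graph = "nat \<times> (nat \<Rightarrow> nat \<Rightarrow> bool)"

definition Gamma :: "'a::zero mat \<Rightarrow> looped_graph" where
  "Gamma A = (dim_row A, \<lambda>i j. A $$ (i,j) \<noteq> 0)"

text \<open>Disjoint union with K_1: a new isolated nonlooped vertex m.\<close>
definition union_K1 :: "looped_graph \<Rightarrow> looped_graph" where
  "union_K1 H = (fst H + 1, \<lambda>i j. i < fst H \<and> j < fst H \<and> snd H i j)"

text \<open>G (on {0..<n}) is a blowup of H: vertex x of G lies in the part V_(f x).\<close>
definition is_blowup :: "nat \<Rightarrow> (nat \<Rightarrow> nat \<Rightarrow> bool) \<Rightarrow> looped_graph \<Rightarrow> bool" where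
  "is_blowup n E H \<longleftrightarrow> (\<exists>f. (\<forall>x<n. f x < fst H) \<and>
      (\<forall>x<n. \<forall>y<n. x \<noteq> y \<longrightarrow> (E x y \<longleftrightarrow> snd H (f x) (f y))))"

text \<open>Column j of U is the binary expansion of j+1 (bit i in row i), so the
  columns are exactly the 15 nonzero vectors of F_2^4.\<close>
definition U_mat :: "bit mat" where
  "U_mat = mat 4 15 (\<lambda>(i,j). if odd ((j + 1) div 2 ^ i) then 1 else 0)"

definition B1_mat :: "bit mat" where
  "B1_mat = 1\<^sub>m 4"

definition B2_mat :: "bit mat" where
  "B2_mat = mat 4 4 (\<lambda>(i,j). if (i,j) \<in> {(0,1),(1,0),(2,3),(3,2)} then 1 else 0)"

definition F2R4A :: looped_graph where
  "F2R4A = Gamma (transpose_mat U_mat * B1_mat * U_mat)"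

definition F2R4B :: looped_graph where
  "F2R4B = Gamma (transpose_mat U_mat * B2_mat * U_mat)"

end

theory Submission
  imports Defs
begin

text \<open>
  A symmetric matrix A over F_2 fitting the graph G has rank at most 4 iff it
  is the Gram matrix (A x y = g_x^T B g_y, vectors g_x in F_2^4) of B = B_1 or B = B_2; and
  such Gram representations of G are exactly blowups of F2R4A or F2R4B together with K_1,
  because the nonzero vectors of F_2^4 are the columns of U (the zero vector is the extra
  isolated vertex).
\<close>

text \<open>Keep F_2 arithmetic in ring notation: the default simp rules would rewrite + and *
  on the type bit into xor and and, which defeats ring normalisation.\<close>
declare add_bit_eq_xor[simp del] mult_bit_eq_and[simp del] minus_bit_def[simp del]
  uminus_bit_def[simp del]

definition fits_graph :: "nat \<Rightarrow> (nat \<Rightarrow> nat \<Rightarrow> bool) \<Rightarrow> 'a::zero mat \<Rightarrow> bool" where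
  "fits_graph n E A \<longleftrightarrow> A \<in> carrier_mat n n \<and> transpose_mat A = A \<and>
     (\<forall>i<n. \<forall>j<n. i \<noteq> j \<longrightarrow> (A $$ (i, j) \<noteq> 0 \<longleftrightarrow> E i j))"

text \<open>The minimum is attained, since the adjacency matrix of a simple graph fits it.\<close>
lemma mr_F2_le_iff:
  assumes "simple_graph n E"
  shows "mr_F2 n E \<le> r \<longleftrightarrow> (\<exists>A :: bit mat. fits_graph n E A \<and> vec_space.rank n A \<le> r)"
proof -
  have mr: "mr_F2 n E = (LEAST r. \<exists>A :: bit mat. fits_graph n E A \<and> vec_space.rank n A = r)"
    unfolding mr_F2_def fits_graph_def by simp
  have "fits_graph n E (mat n n (\<lambda>(x, y). if E x y then 1 else 0 :: bit))"
    using assms by (auto simp: fits_graph_def simple_graph_def)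
  then have "\<exists>r. \<exists>A :: bit mat. fits_graph n E A \<and> vec_space.rank n A = r" by blast
  from LeastI_ex[OF this] have "\<exists>A :: bit mat. fits_graph n E A \<and> vec_space.rank n A = mr_F2 n E"
    unfolding mr .
  then show ?thesis unfolding mr by (auto intro: Least_le[THEN order_trans])
qed

definition indep_cols :: "nat \<Rightarrow> (nat \<Rightarrow> nat \<Rightarrow> 'a::field) \<Rightarrow> nat set \<Rightarrow> bool" where
  "indep_cols n a P \<longleftrightarrow> (\<forall>c. (\<forall>x<n. (\<Sum>p\<in>P. c p * a x p) = 0) \<longrightarrow> (\<forall>p\<in>P. c p = 0))"

context vec_space begin

text \<open>Independent columns are pairwise distinct and form an independent subset of the column
  space, so their number is at most the rank.\<close>
lemma indep_cols_rank:
  assumes A: "A \<in> carrier_mat n nc" and P: "P \<subseteq> {..<nc}"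
    and ind: "indep_cols n (\<lambda>x y. A $$ (x, y)) P"
  shows "card P \<le> rank A"
proof -
  have fin: "finite P" using finite_subset[OF P] by simp
  have entry: "col A p $ x = A $$ (x, p)" if "p \<in> P" "x < n" for p x
    using that A P by auto
  have inj: "inj_on (col A) P"
  proof (rule inj_onI, rule ccontr)
    fix p q assume pq: "p \<in> P" "q \<in> P" "col A p = col A q" "p \<noteq> q"
    define c where "c r = (if r = p then 1 else if r = q then -1 else 0 :: 'a)" for r
    have "(\<Sum>r\<in>P. c r * A $$ (x, r)) = 0" if x: "x < n" for x
    proof -
      have "(\<Sum>r\<in>P. c r * A $$ (x, r)) = (\<Sum>r\<in>{p, q}. c r * A $$ (x, r))"
        using pq by (intro sum.mono_neutral_right[OF fin]) (auto simp: c_def)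
      also have "\<dots> = A $$ (x, p) - A $$ (x, q)" using pq by (simp add: c_def)
      also have "\<dots> = 0" using entry[OF pq(1) x] entry[OF pq(2) x] pq(3) by simp
      finally show ?thesis .
    qed
    then have "c p = 0" using ind pq unfolding indep_cols_def by blast
    then show False by (simp add: c_def)
  qed
  have "lin_indpt (col A ` P)"
  proof
    assume "lin_dep (col A ` P)"
    then obtain T f v where T: "finite T" "T \<subseteq> col A ` P" "lincomb f T = 0\<^sub>v n" "v \<in> T" "f v \<noteq> 0"
      unfolding lin_dep_def by blast
    define c where "c p = (if col A p \<in> T then f (col A p) else 0 :: 'a)" for p
    have T_carrier: "T \<subseteq> carrier_vec n" using T(2) A by (auto simp: col_def)
    have "(\<Sum>p\<in>P. c p * A $$ (x, p)) = 0" if x: "x < n" for x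
    proof -
      have "(\<Sum>p\<in>P. c p * A $$ (x, p)) = (\<Sum>p\<in>P \<inter> col A -` T. f (col A p) * col A p $ x)"
        using fin x entry by (auto simp: c_def sum.inter_restrict intro!: sum.cong)
      also have "\<dots> = (\<Sum>w\<in>T. f w * w $ x)"
      proof (rule sum.reindex_cong[symmetric])
        show "inj_on (col A) (P \<inter> col A -` T)" using inj by (rule inj_on_subset) blast
        show "T = col A ` (P \<inter> col A -` T)" using T(2) by blast
      qed simp
      also have "\<dots> = lincomb f T $ x" using lincomb_index[OF x T_carrier] by simp
      finally show ?thesis using T(3) x by simp
    qed
    then have "\<forall>p\<in>P. c p = 0" using ind unfolding indep_cols_def by blast
    moreover obtain p where "p \<in> P" "v = col A p" using T(2,4) by blast
    ultimately show False using T(4,5) by (auto simp: c_def)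
  qed
  moreover have "col A ` P \<subseteq> set (cols A)" using A P by (auto simp: cols_def)
  ultimately have "card (col A ` P) \<le> rank A" using rank_ge_card_indpt[OF A] by blast
  then show ?thesis using card_image[OF inj] by simp
qed

lemma rank_sum_outer_products: "rank (mat n n (\<lambda>(x, y). \<Sum>k<m. p k x * q k y)) \<le> m"
proof (induction m)
  case 0
  have "mat n n (\<lambda>(x, y). \<Sum>k<(0::nat). p k x * q k y) = 0\<^sub>m n n" by (intro eq_matI) auto
  then show ?case by (metis rank_0I le_refl)
next
  case (Suc m)
  define M1 where "M1 = mat n n (\<lambda>(x, y). \<Sum>k<m. p k x * q k y)"
  define M2 where "M2 = mat n n (\<lambda>(x, y). p m x * q m y)"
  have "mat n n (\<lambda>(x, y). \<Sum>k<Suc m. p k x * q k y) = M1 + M2"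
    by (intro eq_matI) (auto simp: M1_def M2_def)
  moreover have "rank M2 \<le> 1"
    by (rule rank_le_1_product_entries[where f = "p m" and g = "q m"]) (auto simp: M2_def)
  moreover have "M1 \<in> carrier_mat n n" "M2 \<in> carrier_mat n n" by (auto simp: M1_def M2_def)
  ultimately show ?case using rank_subadditive[of M1 n M2] Suc by (simp add: M1_def)
qed

end

subsection \<open>Symmetric decompositions\<close>

definition sym_decomp :: "nat \<Rightarrow> (nat \<Rightarrow> nat \<Rightarrow> 'a::comm_ring) \<Rightarrow> nat \<Rightarrow> nat \<Rightarrow>
    (nat \<Rightarrow> nat \<Rightarrow> 'a) \<Rightarrow> (nat \<Rightarrow> nat \<Rightarrow> 'a) \<Rightarrow> (nat \<Rightarrow> nat \<Rightarrow> 'a) \<Rightarrow> bool" where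
  "sym_decomp n a s h v u w \<longleftrightarrow> (\<forall>x<n. \<forall>y<n.
     a x y = (\<Sum>k<s. v k x * v k y) + (\<Sum>k<h. u k x * w k y + w k x * u k y))"

definition nonzero_rows :: "nat \<Rightarrow> (nat \<Rightarrow> nat \<Rightarrow> 'a::zero) \<Rightarrow> nat set" where
  "nonzero_rows n a = {x. x < n \<and> (\<exists>y<n. a x y \<noteq> 0)}"

lemma indep_cols_zero_row:
  fixes b :: "nat \<Rightarrow> nat \<Rightarrow> 'a::field"
  assumes sym: "\<forall>x<n. \<forall>y<n. b x y = b y x" and q: "q < n" "\<forall>y<n. b q y = 0"
    and ind: "indep_cols n b P" and P: "P \<subseteq> {..<n}"
  shows "q \<notin> P"
proof
  assume qP: "q \<in> P"
  define c where "c p = (if p = q then 1 else 0 :: 'a)" for p :: nat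
  have "(\<Sum>p\<in>P. c p * b x p) = 0" if "x < n" for x
  proof -
    have "(\<Sum>p\<in>P. c p * b x p) = c q * b x q"
      using qP P finite_subset by (intro sum.remove[THEN trans]) (auto simp: c_def)
    then show ?thesis using sym q that by simp
  qed
  then have "c q = 0" using ind qP unfolding indep_cols_def by blast
  then show False by (simp add: c_def)
qed

lemma card_nonzero_rows_less:
  assumes zero_rows: "\<forall>x<n. (\<forall>y<n. a x y = 0) \<longrightarrow> (\<forall>y<n. b x y = 0)"
    and i: "i < n" "j < n" "a i j \<noteq> 0" "\<forall>y<n. b i y = 0"
  shows "card (nonzero_rows n b) < card (nonzero_rows n a)"
proof (rule psubset_card_mono)
  show "finite (nonzero_rows n a)" by (simp add: nonzero_rows_def)
  show "nonzero_rows n b \<subset> nonzero_rows n a"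
    using zero_rows i unfolding nonzero_rows_def by blast
qed

lemma indep_cols_pivot_square:
  fixes a :: "nat \<Rightarrow> nat \<Rightarrow> 'a::field"
  assumes sym: "\<forall>x<n. \<forall>y<n. a x y = a y x" and i: "i < n" "a i i = 1"
    and P: "P \<subseteq> {..<n}" "i \<notin> P"
    and ind: "indep_cols n (\<lambda>x y. a x y - a x i * a y i) P"
  shows "indep_cols n a (insert i P)"
  unfolding indep_cols_def
proof (intro allI impI)
  fix c assume comb: "\<forall>x<n. (\<Sum>p\<in>insert i P. c p * a x p) = 0"
  have fin: "finite P" using P(1) finite_subset by blast
  have comb_split: "c i * a x i + (\<Sum>p\<in>P. c p * a x p) = 0" if "x < n" for x
    using comb that P(2) fin by simp
  define \<beta> where "\<beta> = (\<Sum>p\<in>P. c p * a p i)"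
  have "(\<Sum>p\<in>P. c p * a i p) = \<beta>"
    unfolding \<beta>_def using sym P(1) i(1) by (intro sum.cong) auto
  then have ci: "c i + \<beta> = 0" using comb_split[OF i(1)] i(2) by simp
  have "(\<Sum>p\<in>P. c p * (a x p - a x i * a p i)) = 0" if x: "x < n" for x
  proof -
    have "(\<Sum>p\<in>P. c p * (a x p - a x i * a p i)) = (\<Sum>p\<in>P. c p * a x p) - a x i * \<beta>"
      unfolding \<beta>_def by (simp add: algebra_simps sum_subtractf sum_distrib_left)
    also have "\<dots> = - (a x i * (c i + \<beta>))" using comb_split[OF x] by (simp add: algebra_simps eq_neg_iff_add_eq_0)
    finally show ?thesis using ci by simp
  qed
  then have cP: "\<forall>p\<in>P. c p = 0" using ind unfolding indep_cols_def by blast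
  then have "c i = 0" using ci by (simp add: \<beta>_def)
  with cP show "\<forall>p\<in>insert i P. c p = 0" by blast
qed

lemma indep_cols_pivot_hyperbolic:
  fixes a :: "nat \<Rightarrow> nat \<Rightarrow> 'a::field"
  assumes sym: "\<forall>x<n. \<forall>y<n. a x y = a y x" and ij: "i < n" "j < n" "a i j = 1" "a i i = 0" "a j j = 0"
    and P: "P \<subseteq> {..<n}" "i \<notin> P" "j \<notin> P"
    and ind: "indep_cols n (\<lambda>x y. a x y - (a x i * a y j + a x j * a y i)) P"
  shows "indep_cols n a (insert i (insert j P))"
  unfolding indep_cols_def
proof (intro allI impI)
  fix c assume comb: "\<forall>x<n. (\<Sum>p\<in>insert i (insert j P). c p * a x p) = 0"
  have fin: "finite P" using P(1) finite_subset by blast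
  have "i \<noteq> j" using ij by auto
  then have comb_split: "c i * a x i + (c j * a x j + (\<Sum>p\<in>P. c p * a x p)) = 0" if "x < n" for x
    using comb that P(2,3) fin by simp
  define \<beta>i \<beta>j where "\<beta>i = (\<Sum>p\<in>P. c p * a p i)" and "\<beta>j = (\<Sum>p\<in>P. c p * a p j)"
  have "(\<Sum>p\<in>P. c p * a i p) = \<beta>i" "(\<Sum>p\<in>P. c p * a j p) = \<beta>j"
    unfolding \<beta>i_def \<beta>j_def using sym P(1) ij(1,2) by (auto intro!: sum.cong)
  moreover have "a j i = 1" using sym ij by metis
  ultimately have cj: "c j + \<beta>i = 0" and ci: "c i + \<beta>j = 0"
    using comb_split[OF ij(1)] comb_split[OF ij(2)] ij(3-5) by simp_all
  have "(\<Sum>p\<in>P. c p * (a x p - (a x i * a p j + a x j * a p i))) = 0" if x: "x < n" for x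
  proof -
    have "(\<Sum>p\<in>P. c p * (a x p - (a x i * a p j + a x j * a p i)))
        = (\<Sum>p\<in>P. c p * a x p) - (a x i * \<beta>j + a x j * \<beta>i)"
      unfolding \<beta>i_def \<beta>j_def by (simp add: algebra_simps sum_subtractf sum.distrib sum_distrib_left)
    also have "\<dots> = - (a x i * (c i + \<beta>j) + a x j * (c j + \<beta>i))"
      using comb_split[OF x] by (simp add: algebra_simps eq_neg_iff_add_eq_0)
    finally show ?thesis using ci cj by simp
  qed
  then have cP: "\<forall>p\<in>P. c p = 0" using ind unfolding indep_cols_def by blast
  then have "c i = 0" "c j = 0" using ci cj by (simp_all add: \<beta>i_def \<beta>j_def)
  with cP show "\<forall>p\<in>insert i (insert j P). c p = 0" by blast
qed

text \<open>a has a symmetric decomposition with s squares and h hyperbolic pairs together with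
  s + 2h independent columns certifying that no shorter decomposition exists.\<close>
definition indep_sym_decomp :: "nat \<Rightarrow> (nat \<Rightarrow> nat \<Rightarrow> 'a::field) \<Rightarrow> bool" where
  "indep_sym_decomp n a \<longleftrightarrow> (\<exists>s h v u w P. sym_decomp n a s h v u w \<and>
     P \<subseteq> {..<n} \<and> card P = s + 2 * h \<and> indep_cols n a P)"

lemma indep_sym_decomp_pivot_square:
  fixes a :: "nat \<Rightarrow> nat \<Rightarrow> 'a::field"
  assumes sym: "\<forall>x<n. \<forall>y<n. a x y = a y x" and i: "i < n" "a i i = 1"
    and reduced: "indep_sym_decomp n (\<lambda>x y. a x y - a x i * a y i)"
  shows "indep_sym_decomp n a"
proof -
  define b where "b = (\<lambda>x y. a x y - a x i * a y i)"
  obtain s h v u w P where red: "sym_decomp n b s h v u w" "P \<subseteq> {..<n}"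
    "card P = s + 2 * h" "indep_cols n b P"
    using reduced unfolding indep_sym_decomp_def b_def by blast
  have sym_b: "\<forall>x<n. \<forall>y<n. b x y = b y x" using sym by (auto simp: b_def mult.commute)
  have "\<forall>y<n. b i y = 0" using sym i by (simp add: b_def)
  then have iP: "i \<notin> P" using indep_cols_zero_row[OF sym_b i(1) _ red(4,2)] by blast
  have "sym_decomp n a (Suc s) h (case_nat (\<lambda>x. a x i) v) u w"
    unfolding sym_decomp_def
  proof (intro allI impI)
    fix x y assume "x < n" "y < n"
    have "a x y = b x y + a x i * a y i" by (simp add: b_def)
    also have "b x y = (\<Sum>k<s. v k x * v k y) + (\<Sum>k<h. u k x * w k y + w k x * u k y)"
      using red(1) \<open>x < n\<close> \<open>y < n\<close> unfolding sym_decomp_def by blast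
    finally show "a x y = (\<Sum>k<Suc s. case_nat (\<lambda>x. a x i) v k x * case_nat (\<lambda>x. a x i) v k y)
        + (\<Sum>k<h. u k x * w k y + w k x * u k y)"
      by (simp only: sum.lessThan_Suc_shift nat.case) (simp add: algebra_simps)
  qed
  moreover have "card (insert i P) = Suc s + 2 * h"
    using red(2,3) iP finite_subset[OF red(2)] by simp
  moreover have "indep_cols n a (insert i P)"
    using indep_cols_pivot_square[OF sym i red(2) iP] red(4) by (simp add: b_def)
  moreover have "insert i P \<subseteq> {..<n}" using red(2) i(1) by simp
  ultimately show ?thesis unfolding indep_sym_decomp_def by blast
qed

lemma indep_sym_decomp_pivot_hyperbolic:
  fixes a :: "nat \<Rightarrow> nat \<Rightarrow> 'a::field"
  assumes sym: "\<forall>x<n. \<forall>y<n. a x y = a y x"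
    and ij: "i < n" "j < n" "a i j = 1" "a i i = 0" "a j j = 0"
    and reduced: "indep_sym_decomp n (\<lambda>x y. a x y - (a x i * a y j + a x j * a y i))"
  shows "indep_sym_decomp n a"
proof -
  define b where "b = (\<lambda>x y. a x y - (a x i * a y j + a x j * a y i))"
  obtain s h v u w P where red: "sym_decomp n b s h v u w" "P \<subseteq> {..<n}"
    "card P = s + 2 * h" "indep_cols n b P"
    using reduced unfolding indep_sym_decomp_def b_def by blast
  have sym_b: "\<forall>x<n. \<forall>y<n. b x y = b y x" using sym by (auto simp: b_def mult.commute add.commute)
  have "i \<noteq> j" using ij by auto
  have "a j i = 1" using sym ij(1-3) by simp
  then have "\<forall>y<n. b i y = 0" "\<forall>y<n. b j y = 0" using sym ij by (simp_all add: b_def)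
  then have iP: "i \<notin> P" and jP: "j \<notin> P"
    using indep_cols_zero_row[OF sym_b _ _ red(4,2)] ij(1,2) by blast+
  have "sym_decomp n a s (Suc h) v (case_nat (\<lambda>x. a x i) u) (case_nat (\<lambda>x. a x j) w)"
    unfolding sym_decomp_def
  proof (intro allI impI)
    fix x y assume "x < n" "y < n"
    have "a x y = b x y + (a x i * a y j + a x j * a y i)" by (simp add: b_def)
    also have "b x y = (\<Sum>k<s. v k x * v k y) + (\<Sum>k<h. u k x * w k y + w k x * u k y)"
      using red(1) \<open>x < n\<close> \<open>y < n\<close> unfolding sym_decomp_def by blast
    finally show "a x y = (\<Sum>k<s. v k x * v k y) + (\<Sum>k<Suc h. case_nat (\<lambda>x. a x i) u k x
        * case_nat (\<lambda>x. a x j) w k y + case_nat (\<lambda>x. a x j) w k x * case_nat (\<lambda>x. a x i) u k y)"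
      by (simp only: sum.lessThan_Suc_shift nat.case) (simp add: algebra_simps)
  qed
  moreover have "card (insert i (insert j P)) = s + 2 * Suc h"
    using red(2,3) iP jP \<open>i \<noteq> j\<close> finite_subset[OF red(2)] by simp
  moreover have "indep_cols n a (insert i (insert j P))"
    using indep_cols_pivot_hyperbolic[OF sym ij red(2) iP jP] red(4) by (simp add: b_def)
  moreover have "insert i (insert j P) \<subseteq> {..<n}" using red(2) ij(1,2) by simp
  ultimately show ?thesis unfolding indep_sym_decomp_def by blast
qed

text \<open>Symmetric Gaussian elimination over F_2, by induction on the number of nonzero rows: pivot
  on a nonzero diagonal entry if there is one, and otherwise on a nonzero off-diagonal entry
  (over F_2 every nonzero entry equals 1).\<close>
lemma indep_sym_decomp_exists:
  fixes a :: "nat \<Rightarrow> nat \<Rightarrow> bit"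
  assumes "\<forall>x<n. \<forall>y<n. a x y = a y x"
  shows "indep_sym_decomp n a"
  using assms
proof (induction "card (nonzero_rows n a)" arbitrary: a rule: less_induct)
  case less
  note sym = less.prems
  consider (zero) "\<forall>x<n. \<forall>y<n. a x y = 0"
    | (square) i where "i < n" "a i i = 1"
    | (hyperbolic) i j where "i < n" "j < n" "a i j = 1" "a i i = 0" "a j j = 0"
    by (metis bit_not_zero_iff)
  then show ?case
  proof cases
    case zero
    then have "sym_decomp n a 0 0 v u w \<and> {} \<subseteq> {..<n} \<and> card {} = 0 + 2 * 0 \<and> indep_cols n a {}"
      for v u w by (simp add: sym_decomp_def indep_cols_def)
    then show ?thesis unfolding indep_sym_decomp_def by blast
  next
    case square
    define b where "b = (\<lambda>x y. a x y - a x i * a y i)"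
    have "\<forall>x<n. (\<forall>y<n. a x y = 0) \<longrightarrow> (\<forall>y<n. b x y = 0)" "\<forall>y<n. b i y = 0"
      using sym square by (simp_all add: b_def)
    then have "card (nonzero_rows n b) < card (nonzero_rows n a)"
      using card_nonzero_rows_less[of n a b i i] square by simp
    moreover have "\<forall>x<n. \<forall>y<n. b x y = b y x" using sym by (auto simp: b_def mult.commute)
    ultimately show ?thesis
      using less.hyps indep_sym_decomp_pivot_square[OF sym square] unfolding b_def by blast
  next
    case hyperbolic
    define b where "b = (\<lambda>x y. a x y - (a x i * a y j + a x j * a y i))"
    have "a j i = 1" using sym hyperbolic(1-3) by simp
    then have "\<forall>x<n. (\<forall>y<n. a x y = 0) \<longrightarrow> (\<forall>y<n. b x y = 0)" "\<forall>y<n. b i y = 0"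
      using sym hyperbolic by (simp_all add: b_def)
    then have "card (nonzero_rows n b) < card (nonzero_rows n a)"
      using card_nonzero_rows_less[of n a b i j] hyperbolic by simp
    moreover have "\<forall>x<n. \<forall>y<n. b x y = b y x" using sym by (auto simp: b_def mult.commute add.commute)
    ultimately show ?thesis
      using less.hyps indep_sym_decomp_pivot_hyperbolic[OF sym hyperbolic] unfolding b_def by blast
  qed
qed

subsection \<open>Normal forms of rank at most four over F_2\<close>

lemma sym_decomp_pad:
  assumes "sym_decomp n a s h v u w" "s \<le> s'" "h \<le> h'"
  shows "sym_decomp n a s' h' (\<lambda>k. if k < s then v k else (\<lambda>_. 0))
    (\<lambda>k. if k < h then u k else (\<lambda>_. 0)) (\<lambda>k. if k < h then w k else (\<lambda>_. 0))"
proof -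
  have "(\<Sum>k<s'. (if k < s then v k else (\<lambda>_. 0)) x * (if k < s then v k else (\<lambda>_. 0)) y)
      = (\<Sum>k<s. v k x * v k y)" for x y
    using assms(2) by (intro sum.mono_neutral_cong_right) auto
  moreover have "(\<Sum>k<h'. (if k < h then u k else (\<lambda>_. 0)) x * (if k < h then w k else (\<lambda>_. 0)) y
      + (if k < h then w k else (\<lambda>_. 0)) x * (if k < h then u k else (\<lambda>_. 0)) y)
      = (\<Sum>k<h. u k x * w k y + w k x * u k y)" for x y
    using assms(3) by (intro sum.mono_neutral_cong_right) auto
  ultimately show ?thesis using assms(1) unfolding sym_decomp_def by simp
qed

text \<open>Over F_2 a square together with a hyperbolic pair is a sum of three squares.\<close>
lemma square_plus_hyperbolic_F2:
  fixes p q r p' q' r' :: bit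
  shows "p * p' + (q * r' + r * q') = (q + p) * (q' + p') + (r + p) * (r' + p') + (q + r + p) * (q' + r' + p')"
  by (cases p; cases q; cases r; cases p'; cases q'; cases r'; simp add: add_bit_eq_xor mult_bit_eq_and)

lemma sym_decomp_absorb_hyperbolic:
  fixes a :: "nat \<Rightarrow> nat \<Rightarrow> bit"
  assumes "sym_decomp n a (Suc s) (Suc h) v u w"
  shows "sym_decomp n a (s + 3) h
    (case_nat (\<lambda>x. u 0 x + v 0 x) (case_nat (\<lambda>x. w 0 x + v 0 x)
      (case_nat (\<lambda>x. u 0 x + w 0 x + v 0 x) (\<lambda>k. v (Suc k)))))
    (\<lambda>k. u (Suc k)) (\<lambda>k. w (Suc k))"
  unfolding sym_decomp_def
proof (intro allI impI)
  fix x y assume "x < n" "y < n"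
  then have "a x y = (\<Sum>k<Suc s. v k x * v k y) + (\<Sum>k<Suc h. u k x * w k y + w k x * u k y)"
    using assms unfolding sym_decomp_def by blast
  also have "\<dots> = v 0 x * v 0 y + (u 0 x * w 0 y + w 0 x * u 0 y)
      + ((\<Sum>k<s. v (Suc k) x * v (Suc k) y) + (\<Sum>k<h. u (Suc k) x * w (Suc k) y + w (Suc k) x * u (Suc k) y))"
    by (simp only: sum.lessThan_Suc_shift) (simp add: algebra_simps)
  also have "v 0 x * v 0 y + (u 0 x * w 0 y + w 0 x * u 0 y) = (u 0 x + v 0 x) * (u 0 y + v 0 y)
      + (w 0 x + v 0 x) * (w 0 y + v 0 y) + (u 0 x + w 0 x + v 0 x) * (u 0 y + w 0 y + v 0 y)"
    by (rule square_plus_hyperbolic_F2)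
  finally show "a x y = (\<Sum>k<s + 3. case_nat (\<lambda>x. u 0 x + v 0 x) (case_nat (\<lambda>x. w 0 x + v 0 x)
      (case_nat (\<lambda>x. u 0 x + w 0 x + v 0 x) (\<lambda>k. v (Suc k)))) k x
      * case_nat (\<lambda>x. u 0 x + v 0 x) (case_nat (\<lambda>x. w 0 x + v 0 x)
      (case_nat (\<lambda>x. u 0 x + w 0 x + v 0 x) (\<lambda>k. v (Suc k)))) k y)
      + (\<Sum>k<h. u (Suc k) x * w (Suc k) y + w (Suc k) x * u (Suc k) y)"
    by (simp only: numeral_3_eq_3 add_Suc_right add_0_right sum.lessThan_Suc_shift nat.case)
      (simp add: algebra_simps)
qed


lemma sym_decomp_normal_form:
  fixes a :: "nat \<Rightarrow> nat \<Rightarrow> bit"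
  assumes decomp: "sym_decomp n a s h v u w" and rank: "s + 2 * h \<le> 4"
  shows "(\<exists>v u w. sym_decomp n a 4 0 v u w) \<or> (\<exists>v u w. sym_decomp n a 0 2 v u w)"
proof -
  consider "h = 0" | "s = 0" | s' where "s = Suc s'" "h = Suc 0" "s' + 3 \<le> 4"
    using rank by (cases s; cases h) auto
  then show ?thesis
  proof cases
    case 1
    then show ?thesis using sym_decomp_pad[OF decomp, of 4 0] rank by auto
  next
    case 2
    then show ?thesis using sym_decomp_pad[OF decomp, of 0 2] rank by auto
  next
    case 3
    then show ?thesis
      using sym_decomp_pad[OF sym_decomp_absorb_hyperbolic[of n a s' 0 v u w], of 4 0] decomp by auto
  qed
qed

subsection \<open>Bilinear forms on F_2^4 and their Gram matrices\<close>

definition bilin :: "'a::comm_semiring_0 mat \<Rightarrow> (nat \<Rightarrow> 'a) \<Rightarrow> (nat \<Rightarrow> 'a) \<Rightarrow> 'a" where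
  "bilin B g h = (\<Sum>k<dim_row B. \<Sum>m<dim_col B. g k * B $$ (k, m) * h m)"

lemma bilin_congruence_entry:
  assumes "X \<in> carrier_mat d N" "B \<in> carrier_mat d d" "j < N" "l < N"
  shows "(transpose_mat X * B * X) $$ (j, l) = bilin B (\<lambda>k. X $$ (k, j)) (\<lambda>k. X $$ (k, l))"
  using assms by (simp add: bilin_def scalar_prod_def atLeast0LessThan sum_distrib_left mult.assoc)

lemma bilin_cong:
  assumes "\<forall>k<dim_row B. g k = g' k" "\<forall>m<dim_col B. h m = h' m"
  shows "bilin B g h = bilin B g' h'"
  using assms unfolding bilin_def by (intro sum.cong) auto

lemma bilin_symmetric:
  assumes "B \<in> carrier_mat d d" "transpose_mat B = B"
  shows "bilin B g h = bilin B h g"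
proof -
  have "B $$ (k, m) = B $$ (m, k)" if "k < d" "m < d" for k m
    using assms that by (metis carrier_matD index_transpose_mat(1))
  then show ?thesis
    using assms unfolding bilin_def
    by (subst sum.swap) (auto intro!: sum.cong simp: mult.commute mult.left_commute)
qed

lemma bilin_B1: "bilin B1_mat g h = g 0 * h 0 + g 1 * h 1 + g 2 * h 2 + g 3 * h 3"
  by (simp add: bilin_def B1_mat_def eval_nat_numeral)

lemma bilin_B2: "bilin B2_mat g h = g 0 * h 1 + g 1 * h 0 + g 2 * h 3 + g 3 * h 2"
  by (simp add: bilin_def B2_mat_def eval_nat_numeral)

lemma B1_B2_carrier_symmetric:
  "B1_mat \<in> carrier_mat 4 4" "transpose_mat B1_mat = B1_mat"
  "B2_mat \<in> carrier_mat 4 4" "transpose_mat B2_mat = B2_mat"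
  by (auto simp: B1_mat_def B2_mat_def)

lemma bilin_gram_rank:
  assumes "B \<in> carrier_mat d d"
  shows "vec_space.rank n (mat n n (\<lambda>(x, y). bilin B (W x) (W y))) \<le> d"
proof -
  have "bilin B (W x) (W y) = (\<Sum>k<d. W x k * (\<Sum>m<d. B $$ (k, m) * W y m))" for x y
    using assms by (simp add: bilin_def sum_distrib_left mult.assoc)
  then show ?thesis
    using vec_space.rank_sum_outer_products[of n "\<lambda>k x. W x k" "\<lambda>k y. \<Sum>m<d. B $$ (k, m) * W y m" d]
    by simp
qed

definition bilin_rep ::
    "nat \<Rightarrow> (nat \<Rightarrow> nat \<Rightarrow> bool) \<Rightarrow> 'a::comm_semiring_0 mat \<Rightarrow> (nat \<Rightarrow> nat \<Rightarrow> 'a) \<Rightarrow> bool"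
  where
  "bilin_rep n E B W \<longleftrightarrow> (\<forall>x<n. \<forall>y<n. x \<noteq> y \<longrightarrow> (E x y \<longleftrightarrow> bilin B (W x) (W y) \<noteq> 0))"

lemma bilin_gram_fits:
  assumes "B \<in> carrier_mat d d" "transpose_mat B = B" "bilin_rep n E B W"
  shows "fits_graph n E (mat n n (\<lambda>(x, y). bilin B (W x) (W y)))"
  using assms bilin_symmetric[OF assms(1,2)]
  by (auto simp: fits_graph_def bilin_rep_def)

lemma sym_decomp_four_squares:
  assumes "sym_decomp n a 4 0 v u w" "x < n" "y < n"
  shows "a x y = bilin B1_mat (\<lambda>k. v k x) (\<lambda>k. v k y)"
  using assms by (simp add: sym_decomp_def bilin_B1 eval_nat_numeral ac_simps)

lemma sym_decomp_two_hyperbolic_pairs: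
  assumes "sym_decomp n a 0 2 v u w" "x < n" "y < n"
  shows "a x y = bilin B2_mat ((!) [u 0 x, w 0 x, u 1 x, w 1 x]) ((!) [u 0 y, w 0 y, u 1 y, w 1 y])"
  using assms by (simp add: sym_decomp_def bilin_B2 eval_nat_numeral ac_simps)

lemma symmetric_rank_le_4_gram_F2:
  fixes A :: "bit mat"
  assumes A: "A \<in> carrier_mat n n" "transpose_mat A = A" and rank: "vec_space.rank n A \<le> 4"
  shows "(\<exists>W. \<forall>x<n. \<forall>y<n. A $$ (x, y) = bilin B1_mat (W x) (W y))
    \<or> (\<exists>W. \<forall>x<n. \<forall>y<n. A $$ (x, y) = bilin B2_mat (W x) (W y))"
proof -
  have "\<forall>x<n. \<forall>y<n. A $$ (x, y) = A $$ (y, x)"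
    using A by (metis carrier_matD index_transpose_mat(1))
  then obtain s h v u w P where decomp: "sym_decomp n (\<lambda>x y. A $$ (x, y)) s h v u w"
    and P: "P \<subseteq> {..<n}" "card P = s + 2 * h" "indep_cols n (\<lambda>x y. A $$ (x, y)) P"
    using indep_sym_decomp_exists[of n "\<lambda>x y. A $$ (x, y)"] unfolding indep_sym_decomp_def by blast
  have "s + 2 * h \<le> 4" using vec_space.indep_cols_rank[OF A(1) P(1,3)] P(2) rank by simp
  from sym_decomp_normal_form[OF decomp this] show ?thesis
  proof (elim disjE exE)
    fix v u w assume "sym_decomp n (\<lambda>x y. A $$ (x, y)) 4 0 v u w"
    then have "\<forall>x<n. \<forall>y<n. A $$ (x, y) = bilin B1_mat (\<lambda>k. v k x) (\<lambda>k. v k y)"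
      using sym_decomp_four_squares by blast
    then show ?thesis by (intro disjI1 exI[of _ "\<lambda>x k. v k x"])
  next
    fix v u w assume "sym_decomp n (\<lambda>x y. A $$ (x, y)) 0 2 v u w"
    then have "\<forall>x<n. \<forall>y<n. A $$ (x, y) = bilin B2_mat ((!) [u 0 x, w 0 x, u 1 x, w 1 x])
        ((!) [u 0 y, w 0 y, u 1 y, w 1 y])"
      using sym_decomp_two_hyperbolic_pairs by blast
    then show ?thesis by (intro disjI2 exI[of _ "\<lambda>x. (!) [u 0 x, w 0 x, u 1 x, w 1 x]"])
  qed
qed

lemma rank_le_4_iff_bilin_rep:
  "(\<exists>A :: bit mat. fits_graph n E A \<and> vec_space.rank n A \<le> 4)
    \<longleftrightarrow> (\<exists>W. bilin_rep n E B1_mat W) \<or> (\<exists>W. bilin_rep n E B2_mat W)"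
proof
  assume "\<exists>A :: bit mat. fits_graph n E A \<and> vec_space.rank n A \<le> 4"
  then obtain A :: "bit mat" where A: "fits_graph n E A" "vec_space.rank n A \<le> 4" by blast
  then have "\<forall>x<n. \<forall>y<n. x \<noteq> y \<longrightarrow> (E x y \<longleftrightarrow> A $$ (x, y) \<noteq> 0)"
    by (auto simp: fits_graph_def)
  with symmetric_rank_le_4_gram_F2[of A n] A show "(\<exists>W. bilin_rep n E B1_mat W) \<or> (\<exists>W. bilin_rep n E B2_mat W)"
    unfolding fits_graph_def bilin_rep_def by metis
next
  assume "(\<exists>W. bilin_rep n E B1_mat W) \<or> (\<exists>W. bilin_rep n E B2_mat W)"
  then show "\<exists>A :: bit mat. fits_graph n E A \<and> vec_space.rank n A \<le> 4"
    using bilin_gram_fits bilin_gram_rank B1_B2_carrier_symmetric by metis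
qed

subsection \<open>Representations by forms are blowups\<close>

lemma U_columns_exhaust:
  fixes g :: "nat \<Rightarrow> bit"
  shows "(\<forall>k<4. g k = 0) \<or> (\<exists>j<15. \<forall>k<4. U_mat $$ (k, j) = g k)"
proof -
  have lt4: "k < 4 \<longleftrightarrow> k = 0 \<or> k = 1 \<or> k = 2 \<or> k = 3" for k :: nat by auto
  define j :: nat where "j = (if g 0 = 1 then 1 else 0) + (if g 1 = 1 then 2 else 0)
    + (if g 2 = 1 then 4 else 0) + (if g 3 = 1 then 8 else 0) - 1"
  have "(\<forall>k<4. g k = 0) \<or> (j < 15 \<and> (\<forall>k<4. U_mat $$ (k, j) = g k))"
    by (cases "g 0"; cases "g 1"; cases "g 2"; cases "g 3")
      (simp_all add: lt4 j_def U_mat_def)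
  then show ?thesis by blast
qed

text \<open>The vector attached to vertex j of Gamma(U^T B U) + K_1: column j of U, or zero for
  the added vertex.\<close>
definition U_vec :: "nat \<Rightarrow> nat \<Rightarrow> bit" where
  "U_vec j = (if j < 15 then (\<lambda>k. U_mat $$ (k, j)) else (\<lambda>_. 0))"

lemma union_K1_Gamma_U:
  fixes B :: "bit mat"
  assumes B: "B \<in> carrier_mat 4 4"
  defines "H \<equiv> union_K1 (Gamma (transpose_mat U_mat * B * U_mat))"
  shows "fst H = 16" and "snd H j l \<longleftrightarrow> bilin B (U_vec j) (U_vec l) \<noteq> 0"
proof -
  have U: "U_mat \<in> carrier_mat 4 15" by (simp add: U_mat_def)
  then show "fst H = 16" by (simp add: H_def union_K1_def Gamma_def)
  show "snd H j l \<longleftrightarrow> bilin B (U_vec j) (U_vec l) \<noteq> 0"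
  proof (cases "j < 15 \<and> l < 15")
    case True
    then show ?thesis using bilin_congruence_entry[OF U B] U
      by (simp add: H_def union_K1_def Gamma_def U_vec_def)
  next
    case False
    then show ?thesis using U by (auto simp: H_def union_K1_def Gamma_def U_vec_def bilin_def)
  qed
qed

text \<open>A blowup assigns to each vertex the vector of its part; conversely a representation
  assigns to each vertex the part of its vector.\<close>
lemma blowup_iff_bilin_rep:
  fixes B :: "bit mat"
  assumes B: "B \<in> carrier_mat 4 4"
  shows "is_blowup n E (union_K1 (Gamma (transpose_mat U_mat * B * U_mat))) \<longleftrightarrow> (\<exists>W. bilin_rep n E B W)"
  (is "is_blowup n E ?H \<longleftrightarrow> _")
proof
  assume "is_blowup n E ?H"
  then obtain f where "\<forall>x<n. \<forall>y<n. x \<noteq> y \<longrightarrow> (E x y \<longleftrightarrow> snd ?H (f x) (f y))"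
    unfolding is_blowup_def by blast
  then have "bilin_rep n E B (\<lambda>x. U_vec (f x))"
    unfolding bilin_rep_def using union_K1_Gamma_U(2)[OF B] by blast
  then show "\<exists>W. bilin_rep n E B W" by blast
next
  assume "\<exists>W. bilin_rep n E B W"
  then obtain W where W: "bilin_rep n E B W" ..
  have "\<exists>j<16. \<forall>k<4. U_vec j k = W x k" for x
    using U_columns_exhaust[of "W x"] by (auto simp: U_vec_def intro: exI[of _ 15])
  then obtain f where f: "\<And>x. f x < 16" "\<And>x. \<forall>k<4. U_vec (f x) k = W x k" by metis
  have "bilin B (U_vec (f x)) (U_vec (f y)) = bilin B (W x) (W y)" for x y
    using f(2) B by (intro bilin_cong) auto
  then show "is_blowup n E ?H"
    using W f(1) unfolding is_blowup_def bilin_rep_def union_K1_Gamma_U[OF B]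
    by (intro exI[of _ f]) simp
qed

theorem mainTheorem20:
  fixes n :: nat and E :: "nat \<Rightarrow> nat \<Rightarrow> bool"
  assumes "simple_graph n E"
  shows "mr_F2 n E \<le> 4 \<longleftrightarrow>
    (is_blowup n E (union_K1 F2R4A) \<or> is_blowup n E (union_K1 F2R4B))"
proof -
  have "mr_F2 n E \<le> 4 \<longleftrightarrow> (\<exists>A :: bit mat. fits_graph n E A \<and> vec_space.rank n A \<le> 4)"
    by (rule mr_F2_le_iff[OF assms])
  also have "\<dots> \<longleftrightarrow> (\<exists>W. bilin_rep n E B1_mat W) \<or> (\<exists>W. bilin_rep n E B2_mat W)"
    by (rule rank_le_4_iff_bilin_rep)
  also have "\<dots> \<longleftrightarrow> is_blowup n E (union_K1 F2R4A) \<or> is_blowup n E (union_K1 F2R4B)"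
    unfolding F2R4A_def F2R4B_def
    using blowup_iff_bilin_rep B1_B2_carrier_symmetric(1,3) by blast
  finally show ?thesis .
qed

end
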